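(* Restrict each worker's strategy set to dropping strategies. Consider any economy $\mathcal{E}$ (as in the context) such that either (1) no market $\mathcal{M}(\theta)$, $\theta\in\Theta$, has a preference cycle, or (2) $\mathcal{E}$ satisfies the SPC*. Then, considering Bayesian Nash equilibria in which firms report truthfully and workers use dropping strategies, $\mathcal{E}$ has a unique BNE outcome, namely the one that yields in each state $\theta$ the unique stable matching (for the true preferences) of $\mathcal{M}(\theta)$.
   Context: Matching market: $\mathcal{M}=(F,W,U)$ with finite firms $F=\{f_i\}_{i\in[m]}$, finite workers $W=\{w_j\}_{j\in[n]}$, utilities $u^f_{ij}$ of firm $f_i$ from worker $w_j$ and $u^w_{ij}$ of worker $w_j$ from firm $f_i$; unmatched utility is $0$; all preferences strict; all pairs mutually acceptable. An economy is $\mathcal{E}=(F,W,\{U(\theta)\}_{\theta\in\Theta},\Theta,\Psi)$ with finite $\Theta$, full-support prior $\Psi$, market $\mathcal{M}(\theta)=(F,W,U(\theta))$ in state $\theta$; workers' utilities are state-independent, firms' may depend on $\theta$. Standing assumption: each $\mathcal{M}(\theta)$ has a unique stable matching. Game: $\theta$ drawn by $\Psi$; firms observe $\theta$; each worker knows only his own preferences; all simultaneously submit rank-ordered lists of acceptable partners; firm-proposing Deferred Acceptance is run on the reports. Firms report truthfully; a BNE is a profile where each worker's reported list maximizes his expected utility under $\Psi$ within his allowed strategy set. The outcome of a BNE is the matching produced in each state. A dropping strategy for a worker declares some (possibly no) firms unacceptable and ranks the remaining firms in their true order. A preference cycle in a market is a sequence of distinct firms $f^1,\dots,f^k$ and distinct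 workers $w^1,\dots,w^k$, $k\ge 2$, such that (indices mod $k$) each $f^t$ prefers $w^t$ to $w^{t-1}$ and each $w^t$ prefers $f^{t+1}$ to $f^t$ (the "aligned preferences condition" is the absence of such cycles). Sub-market, top-top match, SPC: a sub-market restricts to $F'\subseteq F$, $W'\subseteq W$; $(f,w)$ is a top-top match of it if each is the other's favorite in it; a market satisfies the SPC if there are orderings $f_1,\dots,f_m$, $w_1,\dots,w_n$ with $(f_i,w_i)$ a top-top match of the sub-market induced by $\{f_j,w_j\}_{j\ge i}$ for each $i\le\min(m,n)$ (order $i$). An economy satisfies the SPC if each $\mathcal{M}(\theta)$ does with possibly state-specific orderings $f_{i|\theta}$, $w_{i|\theta}$; it satisfies the SPC* if moreover, for every $\theta$, $i\le\min(m,n)$ and firm $f$: if $w_{i|\theta}$ strictly prefers $f$ to $f_{i|\theta}$, then for every state $\theta'$ there is $i'<i$ with $f=f_{i'|\theta'}$. *)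

theory Defs
  imports Complex_Main
begin

text \<open>Firms, workers and states are finite types ('f, 'w, 's), so
  F = UNIV, W = UNIV, Theta = UNIV. In a single market, uf f w is the utility of
  firm f from worker w and uw f w the utility of worker w from firm f; being
  unmatched gives 0. A matching is a map from workers to an optional firm in which
  no firm is assigned to two workers.\<close>

definition wval :: "('f \<Rightarrow> 'w \<Rightarrow> real) \<Rightarrow> 'w \<Rightarrow> 'f option \<Rightarrow> real" where
  "wval uw w m = (case m of None \<Rightarrow> 0 | Some f \<Rightarrow> uw f w)"

definition is_matching :: "('w \<Rightarrow> 'f option) \<Rightarrow> bool" where
  "is_matching \<mu> \<longleftrightarrow> (\<forall>w w' f. \<mu> w = Some f \<and> \<mu> w' = Some f \<longrightarrow> w = w')"

definition fval :: "('f \<Rightarrow> 'w \<Rightarrow> real) \<Rightarrow> ('w \<Rightarrow> 'f option) \<Rightarrow> 'f \<Rightarrow> real" where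
  "fval uf \<mu> f = (if \<exists>w. \<mu> w = Some f then uf f (THE w. \<mu> w = Some f) else 0)"

definition stable_matching ::
  "('f \<Rightarrow> 'w \<Rightarrow> real) \<Rightarrow> ('f \<Rightarrow> 'w \<Rightarrow> real) \<Rightarrow> ('w \<Rightarrow> 'f option) \<Rightarrow> bool" where
  "stable_matching uf uw \<mu> \<longleftrightarrow>
     is_matching \<mu>
   \<and> (\<forall>w f. \<mu> w = Some f \<longrightarrow> 0 < uw f w \<and> 0 < uf f w)
   \<and> \<not> (\<exists>f w. wval uw w (\<mu> w) < uw f w \<and> fval uf \<mu> f < uf f w)"

text \<open>Firm-proposing deferred acceptance (simultaneous Gale--Shapley rounds).
  Firms report their true rankings (all workers acceptable); worker w reports the
  dropping strategy D w: the firms in D w are acceptable, ranked in true order.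
  The state of the algorithm is the set rej f of workers that have rejected f.\<close>

definition da_prop :: "('f \<Rightarrow> 'w \<Rightarrow> real) \<Rightarrow> ('f \<Rightarrow> 'w set) \<Rightarrow> 'f \<Rightarrow> 'w option" where
  "da_prop uf rej f =
     (if (UNIV - rej f) = {} then None else Some (ARG_MAX (uf f) w. w \<notin> rej f))"

definition da_accepts ::
  "('f \<Rightarrow> 'w \<Rightarrow> real) \<Rightarrow> ('w \<Rightarrow> 'f set) \<Rightarrow> ('f \<Rightarrow> 'w option) \<Rightarrow> 'f \<Rightarrow> 'w \<Rightarrow> bool" where
  "da_accepts uw D p f w \<longleftrightarrow>
     p f = Some w \<and> f \<in> D w \<and> (\<forall>f'. p f' = Some w \<and> f' \<in> D w \<longrightarrow> uw f' w \<le> uw f w)"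

definition da_step ::
  "('f \<Rightarrow> 'w \<Rightarrow> real) \<Rightarrow> ('f \<Rightarrow> 'w \<Rightarrow> real) \<Rightarrow> ('w \<Rightarrow> 'f set) \<Rightarrow> ('f \<Rightarrow> 'w set) \<Rightarrow> ('f \<Rightarrow> 'w set)" where
  "da_step uf uw D rej = (\<lambda>f. rej f \<union>
     (case da_prop uf rej f of None \<Rightarrow> {}
      | Some w \<Rightarrow> (if da_accepts uw D (da_prop uf rej) f w then {} else {w})))"

text \<open>Every non-terminal round adds a rejection, so after |F|*|W| rounds the
  algorithm has terminated.\<close>

definition da_rej ::
  "('f::finite \<Rightarrow> 'w::finite \<Rightarrow> real) \<Rightarrow> ('f \<Rightarrow> 'w \<Rightarrow> real) \<Rightarrow> ('w \<Rightarrow> 'f set) \<Rightarrow> ('f \<Rightarrow> 'w set)" where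
  "da_rej uf uw D = (da_step uf uw D ^^ (card (UNIV :: 'f set) * card (UNIV :: 'w set))) (\<lambda>_. {})"

definition da ::
  "('f::finite \<Rightarrow> 'w::finite \<Rightarrow> real) \<Rightarrow> ('f \<Rightarrow> 'w \<Rightarrow> real) \<Rightarrow> ('w \<Rightarrow> 'f set) \<Rightarrow> ('w \<Rightarrow> 'f option)" where
  "da uf uw D = (\<lambda>w. let p = da_prop uf (da_rej uf uw D) in
      if \<exists>f. da_accepts uw D p f w then Some (THE f. da_accepts uw D p f w) else None)"

definition economy ::
  "('s::finite \<Rightarrow> real) \<Rightarrow> ('s \<Rightarrow> 'f::finite \<Rightarrow> 'w::finite \<Rightarrow> real) \<Rightarrow> ('f \<Rightarrow> 'w \<Rightarrow> real) \<Rightarrow> bool" where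
  "economy \<Psi> uf uw \<longleftrightarrow>
     (\<forall>\<theta>. 0 < \<Psi> \<theta>) \<and> (\<Sum>\<theta>\<in>UNIV. \<Psi> \<theta>) = 1
   \<and> (\<forall>\<theta> f. inj (uf \<theta> f)) \<and> (\<forall>w. inj (\<lambda>f. uw f w))
   \<and> (\<forall>\<theta> f w. 0 < uf \<theta> f w) \<and> (\<forall>f w. 0 < uw f w)
   \<and> (\<forall>\<theta>. \<exists>!\<mu>. stable_matching (uf \<theta>) uw \<mu>)"

definition exp_util ::
  "('s::finite \<Rightarrow> real) \<Rightarrow> ('s \<Rightarrow> 'f::finite \<Rightarrow> 'w::finite \<Rightarrow> real) \<Rightarrow> ('f \<Rightarrow> 'w \<Rightarrow> real)
     \<Rightarrow> ('w \<Rightarrow> 'f set) \<Rightarrow> 'w \<Rightarrow> real" where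
  "exp_util \<Psi> uf uw D w = (\<Sum>\<theta>\<in>UNIV. \<Psi> \<theta> * wval uw w (da (uf \<theta>) uw D w))"

text \<open>BNE when each worker's strategy set is the set of dropping strategies,
  i.e. the choice of a set of acceptable firms (independent of the state, which
  workers do not observe).\<close>

definition BNE_dropping ::
  "('s::finite \<Rightarrow> real) \<Rightarrow> ('s \<Rightarrow> 'f::finite \<Rightarrow> 'w::finite \<Rightarrow> real) \<Rightarrow> ('f \<Rightarrow> 'w \<Rightarrow> real)
     \<Rightarrow> ('w \<Rightarrow> 'f set) \<Rightarrow> bool" where
  "BNE_dropping \<Psi> uf uw D \<longleftrightarrow>
     (\<forall>w S. exp_util \<Psi> uf uw (D(w := S)) w \<le> exp_util \<Psi> uf uw D w)"

text \<open>Preference cycle (indices 0..k-1, taken mod k).\<close>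

definition pref_cycle ::
  "('f \<Rightarrow> 'w \<Rightarrow> real) \<Rightarrow> ('f \<Rightarrow> 'w \<Rightarrow> real) \<Rightarrow> nat \<Rightarrow> (nat \<Rightarrow> 'f) \<Rightarrow> (nat \<Rightarrow> 'w) \<Rightarrow> bool" where
  "pref_cycle uf uw k fs ws \<longleftrightarrow>
     2 \<le> k \<and> inj_on fs {..<k} \<and> inj_on ws {..<k}
   \<and> (\<forall>t<k. uf (fs t) (ws ((t + k - 1) mod k)) < uf (fs t) (ws t)
          \<and> uw (fs t) (ws t) < uw (fs ((t + 1) mod k)) (ws t))"

definition no_pref_cycle :: "('f \<Rightarrow> 'w \<Rightarrow> real) \<Rightarrow> ('f \<Rightarrow> 'w \<Rightarrow> real) \<Rightarrow> bool" where
  "no_pref_cycle uf uw \<longleftrightarrow> \<not> (\<exists>k fs ws. pref_cycle uf uw k fs ws)"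

text \<open>SPC orderings (0-based): fo enumerates F, wo enumerates W, and for each
  i < min m n, (fo i, wo i) is a top-top match of the sub-market
  {fo j | i \<le> j < m}, {wo j | i \<le> j < n}.\<close>

definition SPC_ordering ::
  "('f::finite \<Rightarrow> 'w::finite \<Rightarrow> real) \<Rightarrow> ('f \<Rightarrow> 'w \<Rightarrow> real) \<Rightarrow> (nat \<Rightarrow> 'f) \<Rightarrow> (nat \<Rightarrow> 'w) \<Rightarrow> bool" where
  "SPC_ordering uf uw fo wo \<longleftrightarrow>
     bij_betw fo {..<card (UNIV :: 'f set)} UNIV \<and> bij_betw wo {..<card (UNIV :: 'w set)} UNIV
   \<and> (\<forall>i < min (card (UNIV :: 'f set)) (card (UNIV :: 'w set)).
        (\<forall>j. i \<le> j \<and> j < card (UNIV :: 'w set) \<longrightarrow> uf (fo i) (wo j) \<le> uf (fo i) (wo i))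
      \<and> (\<forall>j. i \<le> j \<and> j < card (UNIV :: 'f set) \<longrightarrow> uw (fo j) (wo i) \<le> uw (fo i) (wo i)))"

definition SPC_star ::
  "('s \<Rightarrow> 'f::finite \<Rightarrow> 'w::finite \<Rightarrow> real) \<Rightarrow> ('f \<Rightarrow> 'w \<Rightarrow> real) \<Rightarrow> bool" where
  "SPC_star uf uw \<longleftrightarrow> (\<exists>fo wo.
     (\<forall>\<theta>. SPC_ordering (uf \<theta>) uw (fo \<theta>) (wo \<theta>))
   \<and> (\<forall>\<theta> i f. i < min (card (UNIV :: 'f set)) (card (UNIV :: 'w set)) \<and> uw (fo \<theta> i) (wo \<theta> i) < uw f (wo \<theta> i)
        \<longrightarrow> (\<forall>\<theta>'. \<exists>i'<i. f = fo \<theta>' i')))"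

end

(*
  When the true market has a unique stable matching, no dropping strategy helps a worker in
  any state: truncating his true list just below what a deviation would get him either yields
  a matching that is stable for his true list, hence the truthful outcome, or contradicts the
  rural hospitals theorem. So truthful reporting is an equilibrium.

  Conversely, let D be an equilibrium. Without preference cycles, every market of reported
  preferences has a unique stable matching, so reporting truthfully is weakly better than D
  in every state; with a full-support prior it is then equally good in every state, and this
  forces the DA outcome of D to be stable for the true preferences. Under SPC*, induction
  along the SPC orderings shows that every worker finds his SPC partner acceptable in every
  state: otherwise adding that firm would get him the partner in one state and, since every
  firm he prefers is already matched earlier in every state, would not hurt him elsewhere.
  The SPC pairs then determine both the DA outcome and the stable matching.
*)

theory Submission
  imports Defs
begin

section \<open>Iteration on finite types\<close>

lemma finite_ex_max:
  fixes g :: "'a::finite \<Rightarrow> 'b::linorder"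
  assumes "P x"
  shows "\<exists>y. P y \<and> (\<forall>z. P z \<longrightarrow> g z \<le> g y)"
proof -
  have "Max (g ` {x. P x}) \<in> g ` {x. P x}"
    using assms by (intro Max_in) auto
  then obtain y where "P y" "g y = Max (g ` {x. P x})"
    by auto
  then show ?thesis by (auto intro!: exI[of _ y])
qed

lemma funpow_fixpoint_if_measure_increases:
  fixes g :: "'a \<Rightarrow> 'a" and m :: "'a \<Rightarrow> nat"
  assumes increase: "\<And>x. g x \<noteq> x \<Longrightarrow> m x < m (g x)" and bound: "\<And>x. m x \<le> N"
  shows "g ((g ^^ N) x) = (g ^^ N) x"
proof (rule ccontr)
  assume moving: "g ((g ^^ N) x) \<noteq> (g ^^ N) x"
  have "g ((g ^^ k) x) \<noteq> (g ^^ k) x" if "k \<le> N" for k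
  proof
    assume fixed: "g ((g ^^ k) x) = (g ^^ k) x"
    then have "(g ^^ (j + k)) x = (g ^^ k) x" for j
      by (induction j) simp_all
    from this[of "N - k"] fixed moving that show False by simp
  qed
  then have "k \<le> m ((g ^^ k) x)" if "k \<le> Suc N" for k
    using that by (induction k) (auto intro: Suc_leI le_less_trans[OF _ increase])
  from this[of "Suc N"] bound[of "(g ^^ Suc N) x"] show False by simp
qed

lemma funpow_cycle_in_finite_invariant:
  assumes "finite X" "\<phi> ` X \<subseteq> X" "x0 \<in> X"
  obtains x d where "x \<in> X" "0 < d" "(\<phi> ^^ d) x = x" "inj_on (\<lambda>t. (\<phi> ^^ t) x) {0..<d}"
proof -
  have orbit: "(\<phi> ^^ t) x0 \<in> X" for t
    by (induction t) (use assms in auto)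
  have "\<not> inj_on (\<lambda>t. (\<phi> ^^ t) x0) {..card X}"
  proof
    assume "inj_on (\<lambda>t. (\<phi> ^^ t) x0) {..card X}"
    then have "card ((\<lambda>t. (\<phi> ^^ t) x0) ` {..card X}) = Suc (card X)"
      by (simp add: card_image)
    moreover have "card ((\<lambda>t. (\<phi> ^^ t) x0) ` {..card X}) \<le> card X"
      using orbit assms(1) by (intro card_mono) auto
    ultimately show False by simp
  qed
  then obtain a b where "a < b" "(\<phi> ^^ b) x0 = (\<phi> ^^ a) x0"
    unfolding inj_on_def by (metis linorder_neqE_nat)
  moreover have "b = (b - a) + a"
    using \<open>a < b\<close> by simp
  ultimately have returns: "(\<phi> ^^ (b - a)) ((\<phi> ^^ a) x0) = (\<phi> ^^ a) x0"
    by (metis funpow_add comp_apply)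
  define x where "x = (\<phi> ^^ a) x0"
  define d where "d = (LEAST d. 0 < d \<and> (\<phi> ^^ d) x = x)"
  have d: "0 < d \<and> (\<phi> ^^ d) x = x"
    unfolding d_def by (rule LeastI[of _ "b - a"]) (use \<open>a < b\<close> returns x_def in simp)
  have "(\<phi> ^^ e) x \<noteq> x" if "0 < e" "e < d" for e
    using not_less_Least[of e "\<lambda>d. 0 < d \<and> (\<phi> ^^ d) x = x"] that unfolding d_def by blast
  then have "inj_on (\<lambda>t. (\<phi> ^^ t) x) {0..<d}"
    using d by (intro inj_on_funpow_least) auto
  then show thesis
    using that d orbit unfolding x_def by blast
qed

section \<open>Deferred acceptance\<close>

lemma da_prop_SomeD:
  fixes uf :: "'f \<Rightarrow> 'w::finite \<Rightarrow> real"
  assumes proposes: "da_prop uf rej f = Some w"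
  shows "w \<notin> rej f \<and> (\<forall>w'. w' \<notin> rej f \<longrightarrow> uf f w' \<le> uf f w)"
proof -
  from proposes obtain w0 where "w0 \<notin> rej f"
    unfolding da_prop_def by (auto split: if_splits)
  then obtain y where y: "y \<notin> rej f" "\<forall>z. z \<notin> rej f \<longrightarrow> uf f z \<le> uf f y"
    using finite_ex_max[of "\<lambda>w. w \<notin> rej f"] by blast
  have "(ARG_MAX (uf f) w. w \<notin> rej f) \<notin> rej f
      \<and> (\<forall>w'. w' \<notin> rej f \<longrightarrow> uf f w' \<le> uf f (ARG_MAX (uf f) w. w \<notin> rej f))"
    by (rule arg_maxI[of "\<lambda>w. w \<notin> rej f" y "uf f"]) (use y in \<open>auto simp: not_less\<close>)
  then show ?thesis
    using proposes unfolding da_prop_def by (auto split: if_splits)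
qed

lemma da_prop_exI: "w \<notin> rej f \<Longrightarrow> \<exists>w'. da_prop uf rej f = Some w'"
  unfolding da_prop_def by auto

lemma da_step_cases:
  "da_step uf uw D r f = r f
   \<or> (\<exists>w. da_prop uf r f = Some w \<and> \<not> da_accepts uw D (da_prop uf r) f w
        \<and> da_step uf uw D r f = insert w (r f))"
  unfolding da_step_def by (auto split: option.splits)

lemma da_step_accepted: "da_accepts uw D (da_prop uf r) f w \<Longrightarrow> da_step uf uw D r f = r f"
  unfolding da_step_def da_accepts_def by auto

lemma da_step_rejected:
  "da_prop uf r f = Some w \<Longrightarrow> \<not> da_accepts uw D (da_prop uf r) f w
   \<Longrightarrow> da_step uf uw D r f = insert w (r f)"
  unfolding da_step_def by auto

lemma da_rej_fixpoint:
  fixes uf :: "'f::finite \<Rightarrow> 'w::finite \<Rightarrow> real"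
  shows "da_step uf uw D (da_rej uf uw D) = da_rej uf uw D"
proof -
  let ?size = "\<lambda>r :: 'f \<Rightarrow> 'w set. \<Sum>f\<in>UNIV. card (r f)"
  have "?size r < ?size (da_step uf uw D r)" if "da_step uf uw D r \<noteq> r" for r
  proof -
    have grows: "r f \<subseteq> da_step uf uw D r f" for f
      unfolding da_step_def by auto
    with that obtain f0 where "r f0 \<subset> da_step uf uw D r f0"
      by (metis ext psubsetI)
    then have "card (r f0) < card (da_step uf uw D r f0)"
      by (simp add: psubset_card_mono)
    then show ?thesis
      by (intro sum_strict_mono_ex1) (auto intro: card_mono[OF _ grows])
  qed
  moreover have "?size r \<le> card (UNIV :: 'f set) * card (UNIV :: 'w set)" for r
  proof -
    have "card (r f) \<le> card (UNIV :: 'w set)" for f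
      by (rule card_mono) simp_all
    then show ?thesis
      using sum_mono[of UNIV "\<lambda>f. card (r f)" "\<lambda>_. card (UNIV :: 'w set)"] by simp
  qed
  ultimately show ?thesis
    unfolding da_rej_def by (rule funpow_fixpoint_if_measure_increases[where m = ?size])
qed

lemma da_rej_induct:
  assumes "P (\<lambda>_. {})" "\<And>r. P r \<Longrightarrow> P (da_step uf uw D r)"
  shows "P (da_rej uf uw D)"
proof -
  have "P ((da_step uf uw D ^^ k) (\<lambda>_. {}))" for k
    by (induction k) (simp_all add: assms)
  then show ?thesis unfolding da_rej_def .
qed

lemma da_accepts_best_proposer:
  fixes uw :: "'f::finite \<Rightarrow> 'w \<Rightarrow> real"
  assumes "p f = Some w" "f \<in> D w"
  obtains f' where "da_accepts uw D p f' w" "uw f w \<le> uw f' w"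
proof -
  obtain f' where "p f' = Some w \<and> f' \<in> D w" "\<forall>g. p g = Some w \<and> g \<in> D w \<longrightarrow> uw g w \<le> uw f' w"
    using finite_ex_max[of "\<lambda>g. p g = Some w \<and> g \<in> D w" f "\<lambda>g. uw g w"] assms by blast
  then show thesis
    using that assms unfolding da_accepts_def by blast
qed

text \<open>The invariant of deferred acceptance behind the stability of its outcome.\<close>

definition rejections_justified ::
  "('f \<Rightarrow> 'w \<Rightarrow> real) \<Rightarrow> ('f \<Rightarrow> 'w \<Rightarrow> real) \<Rightarrow> ('w \<Rightarrow> 'f set) \<Rightarrow> ('f \<Rightarrow> 'w set) \<Rightarrow> bool" where
  "rejections_justified uf uw D r \<longleftrightarrow> (\<forall>f w. w \<in> r f \<and> f \<in> D w \<longrightarrow>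
     (\<exists>f'. da_prop uf r f' = Some w \<and> f' \<in> D w \<and> uw f w < uw f' w))"

lemma rejections_justified_da_step:
  fixes uf :: "'f::finite \<Rightarrow> 'w::finite \<Rightarrow> real"
  assumes "rejections_justified uf uw D r"
  shows "rejections_justified uf uw D (da_step uf uw D r)"
  unfolding rejections_justified_def
proof (intro allI impI)
  fix f w assume rejected: "w \<in> da_step uf uw D r f \<and> f \<in> D w"
  let ?p = "da_prop uf r"
  have "\<exists>f'. ?p f' = Some w \<and> f' \<in> D w \<and> uw f w < uw f' w"
  proof (cases "w \<in> r f")
    case True
    then show ?thesis using assms rejected unfolding rejections_justified_def by blast
  next
    case False
    then have "?p f = Some w" "\<not> da_accepts uw D ?p f w"
      using rejected da_step_cases[of uf uw D r f] by auto
    then show ?thesis using rejected unfolding da_accepts_def by force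
  qed
  then obtain f' where f': "?p f' = Some w" "f' \<in> D w" "uw f w < uw f' w"
    by blast
  obtain f'' where f'': "da_accepts uw D ?p f'' w" "uw f' w \<le> uw f'' w"
    using da_accepts_best_proposer[of ?p f' w D uw] f'(1,2) by blast
  have "da_step uf uw D r f'' = r f''"
    using f''(1) by (rule da_step_accepted)
  then have "da_prop uf (da_step uf uw D r) f'' = ?p f''"
    unfolding da_prop_def by simp
  with f' f'' show "\<exists>f'. da_prop uf (da_step uf uw D r) f' = Some w \<and> f' \<in> D w \<and> uw f w < uw f' w"
    unfolding da_accepts_def by force
qed

lemma rejections_justified_da_rej:
  "rejections_justified uf uw D (da_rej uf uw D)"
  by (rule da_rej_induct) (simp add: rejections_justified_def, rule rejections_justified_da_step)

lemma da_prop_da_rej_accepted: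
  assumes "da_prop uf (da_rej uf uw D) f = Some w"
  shows "da_accepts uw D (da_prop uf (da_rej uf uw D)) f w"
proof (rule ccontr)
  assume "\<not> ?thesis"
  then have "da_step uf uw D (da_rej uf uw D) f = insert w (da_rej uf uw D f)"
    using assms by (rule da_step_rejected[rotated])
  then have "w \<in> da_step uf uw D (da_rej uf uw D) f"
    by simp
  then have "w \<in> da_rej uf uw D f"
    by (simp only: da_rej_fixpoint)
  then show False using da_prop_SomeD[OF assms] by blast
qed

section \<open>Stability for reported preferences\<close>

lemma wval_simps [simp]: "wval uw w None = 0" "wval uw w (Some f) = uw f w"
  unfolding wval_def by simp_all

lemma fval_Some:
  assumes "is_matching \<mu>" "\<mu> w = Some f"
  shows "fval uf \<mu> f = uf f w"
proof -
  have "(THE w'. \<mu> w' = Some f) = w"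
    using assms unfolding is_matching_def by (auto intro!: the_equality)
  then show ?thesis
    using assms(2) unfolding fval_def by auto
qed

lemma fval_None: "(\<And>w. \<mu> w \<noteq> Some f) \<Longrightarrow> fval uf \<mu> f = 0"
  unfolding fval_def by auto

lemma card_matched_workers_eq_card_matched_firms:
  assumes "is_matching \<mu>"
  shows "card {w. \<mu> w \<noteq> None} = card {f. \<exists>w. \<mu> w = Some f}"
proof -
  have "inj_on (\<lambda>w. the (\<mu> w)) {w. \<mu> w \<noteq> None}"
    using assms unfolding is_matching_def inj_on_def by fastforce
  moreover have "(\<lambda>w. the (\<mu> w)) ` {w. \<mu> w \<noteq> None} = {f. \<exists>w. \<mu> w = Some f}"
    by force
  ultimately show ?thesis
    by (metis card_image)
qed

definition stable_under ::
  "('f \<Rightarrow> 'w \<Rightarrow> real) \<Rightarrow> ('f \<Rightarrow> 'w \<Rightarrow> real) \<Rightarrow> ('w \<Rightarrow> 'f set) \<Rightarrow> ('w \<Rightarrow> 'f option) \<Rightarrow> bool" where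
  "stable_under uf uw D \<mu> \<longleftrightarrow> is_matching \<mu> \<and> (\<forall>w f. \<mu> w = Some f \<longrightarrow> f \<in> D w)
     \<and> (\<forall>f w. f \<in> D w \<longrightarrow> \<not> (wval uw w (\<mu> w) < uw f w \<and> fval uf \<mu> f < uf f w))"

lemma stable_under_is_matching: "stable_under uf uw D \<mu> \<Longrightarrow> is_matching \<mu>"
  unfolding stable_under_def by blast

lemma stable_under_acceptable: "stable_under uf uw D \<mu> \<Longrightarrow> \<mu> w = Some f \<Longrightarrow> f \<in> D w"
  unfolding stable_under_def by blast

lemma stable_under_no_blocking:
  "stable_under uf uw D \<mu> \<Longrightarrow> f \<in> D w \<Longrightarrow> wval uw w (\<mu> w) < uw f w \<Longrightarrow> uf f w \<le> fval uf \<mu> f"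
  unfolding stable_under_def by (meson not_less)

lemma stable_under_shrink:
  assumes "stable_under uf uw A \<mu>" "\<And>w. B w \<subseteq> A w" "\<And>w f. \<mu> w = Some f \<Longrightarrow> f \<in> B w"
  shows "stable_under uf uw B \<mu>"
  using assms unfolding stable_under_def by blast

locale market =
  fixes uf :: "'f::finite \<Rightarrow> 'w::finite \<Rightarrow> real" and uw :: "'f \<Rightarrow> 'w \<Rightarrow> real"
  assumes uf_inj: "\<And>f. inj (uf f)" and uw_inj: "\<And>w. inj (\<lambda>f. uw f w)"
    and uf_pos: "\<And>f w. 0 < uf f w" and uw_pos: "\<And>f w. 0 < uw f w"
begin

lemma uf_eq_iff: "uf f w = uf f w' \<longleftrightarrow> w = w'"
  using uf_inj[of f] by (auto dest: injD)

lemma uw_eq_iff: "uw f w = uw f' w \<longleftrightarrow> f = f'"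
  using uw_inj[of w] by (auto dest: injD)

lemma wval_nonneg: "0 \<le> wval uw w m"
  using uw_pos by (cases m) (auto intro: less_imp_le)

lemma fval_nonneg: "0 \<le> fval uf \<mu> f"
  unfolding fval_def using uf_pos by (auto intro: less_imp_le)

lemma wval_eq_iff: "wval uw w m = wval uw w m' \<longleftrightarrow> m = m'"
proof -
  have "uw f w \<noteq> 0" for f
    using uw_pos[of f w] by simp
  then show ?thesis
    using uw_eq_iff by (cases m; cases m') auto
qed

lemma stable_matching_iff_stable_under_UNIV:
  "stable_matching uf uw \<mu> \<longleftrightarrow> stable_under uf uw (\<lambda>_. UNIV) \<mu>"
  unfolding stable_under_def stable_matching_def using uf_pos uw_pos by blast

lemma da_accepts_unique: "da_accepts uw D p f w \<Longrightarrow> da_accepts uw D p f' w \<Longrightarrow> f = f'"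
  unfolding da_accepts_def using uw_eq_iff by (meson order_antisym)

lemma da_eq_Some_iff: "da uf uw D w = Some f \<longleftrightarrow> da_accepts uw D (da_prop uf (da_rej uf uw D)) f w"
proof -
  let ?acc = "\<lambda>f. da_accepts uw D (da_prop uf (da_rej uf uw D)) f w"
  have "?acc f \<longleftrightarrow> (\<exists>g. ?acc g) \<and> f = (THE g. ?acc g)"
    using da_accepts_unique by (metis theI)
  then show ?thesis
    unfolding da_def Let_def by auto
qed

lemma is_matching_da: "is_matching (da uf uw D)"
  unfolding is_matching_def da_eq_Some_iff da_accepts_def by auto

lemma da_acceptable: "da uf uw D w = Some f \<Longrightarrow> f \<in> D w"
  unfolding da_eq_Some_iff da_accepts_def by auto

lemma da_proposal_accepted:
  "da_prop uf (da_rej uf uw D) f = Some w \<Longrightarrow> da uf uw D w = Some f"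
  unfolding da_eq_Some_iff by (rule da_prop_da_rej_accepted)

lemma fval_da_ge:
  assumes "w \<notin> da_rej uf uw D f"
  shows "uf f w \<le> fval uf (da uf uw D) f"
proof -
  obtain w' where w': "da_prop uf (da_rej uf uw D) f = Some w'"
    using da_prop_exI[of w "da_rej uf uw D" f uf] assms by blast
  then have "uf f w \<le> uf f w'"
    using da_prop_SomeD[OF w'] assms by blast
  moreover have "fval uf (da uf uw D) f = uf f w'"
    using is_matching_da da_proposal_accepted[OF w'] by (rule fval_Some)
  ultimately show ?thesis
    by simp
qed

lemma stable_under_da: "stable_under uf uw D (da uf uw D)"
proof -
  let ?\<mu> = "da uf uw D" and ?p = "da_prop uf (da_rej uf uw D)"
  have "\<not> (wval uw w (?\<mu> w) < uw f w \<and> fval uf ?\<mu> f < uf f w)" if acceptable: "f \<in> D w" for f w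
  proof (cases "w \<in> da_rej uf uw D f")
    case True
    then obtain f' where f': "?p f' = Some w" "f' \<in> D w" "uw f w < uw f' w"
      using rejections_justified_da_rej[of uf uw D] acceptable
      unfolding rejections_justified_def by blast
    then obtain f'' where "da_accepts uw D ?p f'' w" "uw f' w \<le> uw f'' w"
      using da_accepts_best_proposer[of ?p f' w D uw] by blast
    moreover from this(1) have "?\<mu> w = Some f''"
      using da_eq_Some_iff by blast
    ultimately show ?thesis
      using f'(3) by simp
  next
    case False
    then have "uf f w \<le> fval uf ?\<mu> f"
      by (rule fval_da_ge)
    then show ?thesis
      by simp
  qed
  then show ?thesis
    unfolding stable_under_def using is_matching_da da_acceptable by blast
qed

lemma da_step_preserves_stable_pairs:
  assumes stable: "stable_under uf uw D \<sigma>" and kept: "\<forall>f w. w \<in> r f \<longrightarrow> \<sigma> w \<noteq> Some f"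
  shows "\<forall>f w. w \<in> da_step uf uw D r f \<longrightarrow> \<sigma> w \<noteq> Some f"
proof (intro allI impI notI)
  fix f w assume rejected: "w \<in> da_step uf uw D r f" and partner: "\<sigma> w = Some f"
  let ?p = "da_prop uf r"
  have "w \<notin> r f" using kept partner by blast
  then have "?p f = Some w" "\<not> da_accepts uw D ?p f w"
    using rejected da_step_cases[of uf uw D r f] by auto
  moreover have "f \<in> D w"
    using stable partner by (rule stable_under_acceptable)
  ultimately obtain f' where f': "?p f' = Some w" "f' \<in> D w" "uw f w < uw f' w"
    unfolding da_accepts_def by force
  have "fval uf \<sigma> f' < uf f' w"
  proof (cases "\<exists>w'. \<sigma> w' = Some f'")
    case True
    then obtain w' where w': "\<sigma> w' = Some f'" by blast
    have "w' \<noteq> w" using w' partner f' by auto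
    moreover have "w' \<notin> r f'" using kept w' by blast
    ultimately have "uf f' w' < uf f' w"
      using da_prop_SomeD[OF f'(1)] uf_eq_iff by (meson order_le_less)
    then show ?thesis
      using fval_Some[OF stable_under_is_matching[OF stable] w'] by simp
  next
    case False
    then show ?thesis using fval_None[of \<sigma> f'] uf_pos by auto
  qed
  moreover have "wval uw w (\<sigma> w) < uw f' w"
    using partner f' by simp
  ultimately show False
    using stable_under_no_blocking[OF stable f'(2)] by fastforce
qed

lemma da_rej_avoids_stable_pairs:
  assumes "stable_under uf uw D \<sigma>" "\<sigma> w = Some f"
  shows "w \<notin> da_rej uf uw D f"
proof -
  have "\<forall>f w. w \<in> da_rej uf uw D f \<longrightarrow> \<sigma> w \<noteq> Some f"
    by (rule da_rej_induct) (use da_step_preserves_stable_pairs[OF assms(1)] in auto)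
  with assms(2) show ?thesis by blast
qed

lemma da_firm_optimal:
  assumes "stable_under uf uw D \<sigma>"
  shows "fval uf \<sigma> f \<le> fval uf (da uf uw D) f"
proof (cases "\<exists>w. \<sigma> w = Some f")
  case True
  then obtain w where w: "\<sigma> w = Some f" by blast
  then have "fval uf \<sigma> f = uf f w"
    by (rule fval_Some[OF stable_under_is_matching[OF assms]])
  also have "\<dots> \<le> fval uf (da uf uw D) f"
    using da_rej_avoids_stable_pairs[OF assms w] by (rule fval_da_ge)
  finally show ?thesis .
next
  case False
  then show ?thesis using fval_None[of \<sigma> f] fval_nonneg by simp
qed

lemma da_worker_pessimal:
  assumes stable: "stable_under uf uw D \<sigma>"
  shows "wval uw w (da uf uw D w) \<le> wval uw w (\<sigma> w)"
proof (cases "da uf uw D w")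
  case None
  then show ?thesis using wval_nonneg by simp
next
  case (Some f)
  show ?thesis
  proof (rule ccontr)
    assume "\<not> ?thesis"
    then have better: "wval uw w (\<sigma> w) < uw f w" using Some by simp
    have "fval uf \<sigma> f < uf f w"
    proof (cases "\<exists>w'. \<sigma> w' = Some f")
      case True
      then obtain w' where w': "\<sigma> w' = Some f" by blast
      then have "fval uf \<sigma> f = uf f w'"
        by (rule fval_Some[OF stable_under_is_matching[OF stable]])
      moreover have "fval uf \<sigma> f \<le> uf f w"
        using da_firm_optimal[OF stable, of f] fval_Some[OF is_matching_da Some] by simp
      moreover have "uf f w' \<noteq> uf f w"
        using w' better uf_eq_iff by auto
      ultimately show ?thesis
        by simp
    next
      case False
      then show ?thesis using fval_None[of \<sigma> f] uf_pos by auto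
    qed
    then show False
      using stable_under_no_blocking[OF stable da_acceptable[OF Some] better] by simp
  qed
qed

text \<open>Rural hospitals theorem: by worker-pessimality DA matches no more workers than \<open>\<sigma>\<close>,
  by firm-optimality no fewer firms, and both matchings pair as many workers as firms.\<close>

lemma stable_under_matched_workers:
  assumes "stable_under uf uw A \<sigma>"
  shows "{w. \<sigma> w \<noteq> None} = {w. da uf uw A w \<noteq> None}"
proof -
  let ?\<mu> = "da uf uw A"
  have workers: "{w. ?\<mu> w \<noteq> None} \<subseteq> {w. \<sigma> w \<noteq> None}"
  proof
    fix w assume "w \<in> {w. ?\<mu> w \<noteq> None}"
    then obtain f where "?\<mu> w = Some f" by blast
    then have "uw f w \<le> wval uw w (\<sigma> w)"
      using da_worker_pessimal[OF assms, of w] by simp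
    then show "w \<in> {w. \<sigma> w \<noteq> None}"
      using uw_pos[of f w] by (cases "\<sigma> w") auto
  qed
  have "{f. \<exists>w. \<sigma> w = Some f} \<subseteq> {f. \<exists>w. ?\<mu> w = Some f}"
  proof
    fix f assume "f \<in> {f. \<exists>w. \<sigma> w = Some f}"
    then obtain w where "\<sigma> w = Some f" by blast
    then have "0 < fval uf \<sigma> f"
      using fval_Some[OF stable_under_is_matching[OF assms]] uf_pos[of f w] by simp
    then have "0 < fval uf ?\<mu> f"
      using da_firm_optimal[OF assms, of f] by simp
    then show "f \<in> {f. \<exists>w. ?\<mu> w = Some f}"
      using fval_None[of ?\<mu> f] by force
  qed
  then have "card {w. \<sigma> w \<noteq> None} \<le> card {w. ?\<mu> w \<noteq> None}"
    using card_matched_workers_eq_card_matched_firms[OF stable_under_is_matching[OF assms]]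
      card_matched_workers_eq_card_matched_firms[OF is_matching_da, of A]
    by (simp add: card_mono)
  moreover have "card {w. ?\<mu> w \<noteq> None} \<le> card {w. \<sigma> w \<noteq> None}"
    using workers by (simp add: card_mono)
  ultimately show ?thesis
    using card_subset_eq[OF finite workers] by simp
qed

lemma stable_under_unmatched_iff:
  "stable_under uf uw A \<sigma> \<Longrightarrow> stable_under uf uw A \<sigma>' \<Longrightarrow> \<sigma> w = None \<longleftrightarrow> \<sigma>' w = None"
  using stable_under_matched_workers[of A \<sigma>] stable_under_matched_workers[of A \<sigma>'] by blast

end

section \<open>Single-worker deviations\<close>

context market
begin

lemma stable_under_truncation_extends:
  assumes stable: "stable_under uf uw (D(w := T)) \<sigma>" and matched: "\<sigma> w = Some g"
    and truncated: "\<And>f. f \<notin> T \<Longrightarrow> uw f w < uw g w"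
  shows "stable_under uf uw (D(w := UNIV)) \<sigma>"
  unfolding stable_under_def
proof (intro conjI allI impI)
  show "is_matching \<sigma>"
    using stable by (rule stable_under_is_matching)
  show "f \<in> (D(w := UNIV)) w'" if "\<sigma> w' = Some f" for w' f
    using stable_under_acceptable[OF stable that] by (cases "w' = w") auto
  show "\<not> (wval uw w' (\<sigma> w') < uw f w' \<and> fval uf \<sigma> f < uf f w')"
    if "f \<in> (D(w := UNIV)) w'" for f w'
  proof (cases "w' = w \<and> f \<notin> T")
    case True
    then show ?thesis using matched truncated by fastforce
  next
    case False
    with that have "f \<in> (D(w := T)) w'" by auto
    then show ?thesis
      using stable_under_no_blocking[OF stable] by fastforce
  qed
qed

text \<open>Truncation argument: if reporting \<open>S\<close> gets \<open>w\<close> the firm \<open>h\<close>, truncate the true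
  list below \<open>h\<close>. If \<open>w\<close> is matched under the truncation, that outcome is also stable
  for the truthful report, hence equal to it by uniqueness; if not, the outcomes under \<open>S\<close>
  and under the truncation are both stable for the intersection of the two reports,
  contradicting the rural hospitals theorem.\<close>

lemma truthful_report_not_worse:
  assumes unique: "\<And>\<sigma> \<sigma>'. stable_under uf uw (D(w := UNIV)) \<sigma>
      \<Longrightarrow> stable_under uf uw (D(w := UNIV)) \<sigma>' \<Longrightarrow> \<sigma> = \<sigma>'"
  shows "wval uw w (da uf uw (D(w := S)) w) \<le> wval uw w (da uf uw (D(w := UNIV)) w)"
proof (cases "da uf uw (D(w := S)) w")
  case None
  then show ?thesis using wval_nonneg by simp
next
  case (Some h)
  let ?\<nu> = "da uf uw (D(w := S))"
  define T where "T = {g. uw h w \<le> uw g w}"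
  let ?\<sigma> = "da uf uw (D(w := T))"
  show ?thesis
  proof (cases "?\<sigma> w")
    case (Some g)
    have "g \<in> T"
      using da_acceptable[OF Some] by simp
    then have "stable_under uf uw (D(w := UNIV)) ?\<sigma>"
      by (intro stable_under_truncation_extends[OF stable_under_da Some]) (auto simp: T_def)
    then have "da uf uw (D(w := UNIV)) w = Some g"
      using unique stable_under_da Some by metis
    with \<open>?\<nu> w = Some h\<close> \<open>g \<in> T\<close> show ?thesis
      by (simp add: T_def)
  next
    case None
    let ?R = "D(w := S \<inter> T)"
    have "stable_under uf uw ?R ?\<sigma>"
    proof (rule stable_under_shrink[OF stable_under_da])
      show "?R w' \<subseteq> (D(w := T)) w'" for w'
        by simp
      show "f \<in> ?R w'" if "?\<sigma> w' = Some f" for w' f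
        using da_acceptable[OF that] None that by (cases "w' = w") auto
    qed
    moreover have "stable_under uf uw ?R ?\<nu>"
    proof (rule stable_under_shrink[OF stable_under_da])
      show "?R w' \<subseteq> (D(w := S)) w'" for w'
        by simp
      show "f \<in> ?R w'" if "?\<nu> w' = Some f" for w' f
        using da_acceptable[OF that] \<open>?\<nu> w = Some h\<close> that by (cases "w' = w") (auto simp: T_def)
    qed
    ultimately show ?thesis
      using stable_under_unmatched_iff None \<open>?\<nu> w = Some h\<close> by (metis option.distinct(1))
  qed
qed

text \<open>The outcome of the truthful report of \<open>w\<close> gives \<open>w\<close> the same partner, so it is stable
  for \<open>D\<close> and equals \<open>da uf uw D\<close>; being stable for the truthful report, it admits no
  blocking pair at \<open>w\<close>.\<close>

lemma stable_matching_da_if_truthful_not_better: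
  assumes unique: "\<And>\<sigma> \<sigma>'. stable_under uf uw D \<sigma> \<Longrightarrow> stable_under uf uw D \<sigma>' \<Longrightarrow> \<sigma> = \<sigma>'"
    and same: "\<And>w. wval uw w (da uf uw (D(w := UNIV)) w) = wval uw w (da uf uw D w)"
  shows "stable_matching uf uw (da uf uw D)"
  unfolding stable_matching_iff_stable_under_UNIV stable_under_def
proof (intro conjI allI impI notI)
  let ?\<mu> = "da uf uw D"
  show "is_matching ?\<mu>"
    by (rule is_matching_da)
  fix f w
  assume blocking: "wval uw w (?\<mu> w) < uw f w \<and> fval uf ?\<mu> f < uf f w"
  let ?\<mu>' = "da uf uw (D(w := UNIV))"
  have "?\<mu>' w = ?\<mu> w"
    using same wval_eq_iff by blast
  have "stable_under uf uw D ?\<mu>'"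
  proof (rule stable_under_shrink[OF stable_under_da])
    show "D w' \<subseteq> (D(w := UNIV)) w'" for w'
      by simp
    show "g \<in> D w'" if "?\<mu>' w' = Some g" for w' g
      using da_acceptable[OF that] da_acceptable[of D w g] \<open>?\<mu>' w = ?\<mu> w\<close> that
      by (cases "w' = w") auto
  qed
  then have "?\<mu>' = ?\<mu>"
    using unique stable_under_da by blast
  with blocking show False
    using stable_under_no_blocking[OF stable_under_da, of f "D(w := UNIV)" w] by fastforce
qed (simp_all)

lemma da_add_acceptable_firm_cases:
  assumes "da uf uw (D(w := insert g (D w))) w \<noteq> Some g"
  shows "wval uw w (da uf uw D w) \<le> wval uw w (da uf uw (D(w := insert g (D w))) w)"
proof -
  let ?D' = "D(w := insert g (D w))"
  have "stable_under uf uw D (da uf uw ?D')"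
  proof (rule stable_under_shrink[OF stable_under_da])
    show "D w' \<subseteq> ?D' w'" for w'
      by auto
    show "f \<in> D w'" if "da uf uw ?D' w' = Some f" for w' f
      using da_acceptable[OF that] assms that by (cases "w' = w") auto
  qed
  then show ?thesis
    by (rule da_worker_pessimal)
qed

end

section \<open>Preference cycles\<close>

lemma pref_cycle_if_periodic:
  assumes d: "2 \<le> d" and ws_mod: "\<And>t. ws (t mod d) = ws t" and fs_mod: "\<And>t. fs (t mod d) = fs t"
    and "inj_on fs {..<d}" "inj_on ws {..<d}"
    and firm_prefers: "\<And>t. uf (fs (Suc t)) (ws t) < uf (fs (Suc t)) (ws (Suc t))"
    and worker_prefers: "\<And>t. uw (fs t) (ws t) < uw (fs (Suc t)) (ws t)"
  shows "pref_cycle uf uw d fs ws"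
  unfolding pref_cycle_def
proof (intro conjI allI impI)
  fix t assume "t < d"
  have "Suc (t + d - 1) = t + d"
    using d by simp
  moreover have "ws (t + d) = ws t" "fs (t + d) = fs t"
    using ws_mod[of "t + d"] ws_mod[of t] fs_mod[of "t + d"] fs_mod[of t] by simp_all
  ultimately show "uf (fs t) (ws ((t + d - 1) mod d)) < uf (fs t) (ws t)"
    using firm_prefers[of "t + d - 1"] ws_mod by simp
  show "uw (fs t) (ws t) < uw (fs ((t + 1) mod d)) (ws t)"
    using worker_prefers[of t] fs_mod by simp
qed (use assms in auto)

context market
begin

text \<open>Stability of \<open>\<sigma>'\<close> for the pair \<open>(f, w)\<close> yields \<open>w'\<close>, and then stability of \<open>\<sigma>\<close>
  for the pair \<open>(f, w')\<close> shows that \<open>w'\<close> too prefers \<open>\<sigma>\<close>.\<close>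

lemma stable_under_preference_successor:
  assumes stable: "stable_under uf uw A \<sigma>" and stable': "stable_under uf uw A \<sigma>'"
    and prefers: "wval uw w (\<sigma>' w) < wval uw w (\<sigma> w)"
  obtains f w' where "\<sigma> w = Some f" "\<sigma>' w' = Some f" "uf f w < uf f w'"
    "wval uw w' (\<sigma>' w') < wval uw w' (\<sigma> w')"
proof -
  obtain f where f: "\<sigma> w = Some f"
    using prefers wval_nonneg[of w "\<sigma>' w"] by (cases "\<sigma> w") auto
  have "uf f w \<le> fval uf \<sigma>' f"
    using stable_under_no_blocking[OF stable' stable_under_acceptable[OF stable f]] prefers f
    by simp
  then obtain w' where w': "\<sigma>' w' = Some f"
    using fval_None[of \<sigma>' f] uf_pos[of f w] by force
  have "w' \<noteq> w"
    using w' f prefers by auto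
  moreover have "uf f w \<le> uf f w'"
    using \<open>uf f w \<le> fval uf \<sigma>' f\<close> fval_Some[OF stable_under_is_matching[OF stable'] w'] by simp
  ultimately have closer: "uf f w < uf f w'"
    using uf_eq_iff by (metis order_le_less)
  moreover have "fval uf \<sigma> f = uf f w"
    using stable_under_is_matching[OF stable] f by (rule fval_Some)
  ultimately have "uw f w' \<le> wval uw w' (\<sigma> w')"
    using stable_under_no_blocking[OF stable stable_under_acceptable[OF stable' w']]
    by (metis linorder_not_le)
  moreover have "\<sigma> w' \<noteq> Some f"
    using stable_under_is_matching[OF stable] f \<open>w' \<noteq> w\<close> unfolding is_matching_def by blast
  then have "wval uw w' (\<sigma> w') \<noteq> uw f w'"
    using wval_eq_iff[of w' "\<sigma> w'" "Some f"] by simp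
  ultimately show thesis
    using that f w' closer by fastforce
qed

text \<open>Iterating the successor from a worker who strictly prefers one stable matching to
  another eventually runs around a cycle, and that cycle is a preference cycle.\<close>

lemma pref_cycle_if_stable_under_differ:
  assumes stable: "stable_under uf uw A \<sigma>" and stable': "stable_under uf uw A \<sigma>'"
    and prefers: "wval uw w0 (\<sigma>' w0) < wval uw w0 (\<sigma> w0)"
  shows "\<exists>k fs ws. pref_cycle uf uw k fs ws"
proof -
  define X where "X = {w. wval uw w (\<sigma>' w) < wval uw w (\<sigma> w)}"
  have "\<forall>w\<in>X. \<exists>w' f. \<sigma> w = Some f \<and> \<sigma>' w' = Some f \<and> uf f w < uf f w' \<and> w' \<in> X"
  proof
    fix w assume "w \<in> X"
    then obtain f w' where "\<sigma> w = Some f" "\<sigma>' w' = Some f" "uf f w < uf f w'"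
      "wval uw w' (\<sigma>' w') < wval uw w' (\<sigma> w')"
      using stable_under_preference_successor[OF stable stable', of w] unfolding X_def by blast
    then show "\<exists>w' f. \<sigma> w = Some f \<and> \<sigma>' w' = Some f \<and> uf f w < uf f w' \<and> w' \<in> X"
      unfolding X_def by blast
  qed
  from bchoice[OF this] obtain succ
    where succ: "\<forall>w\<in>X. \<exists>f. \<sigma> w = Some f \<and> \<sigma>' (succ w) = Some f
      \<and> uf f w < uf f (succ w) \<and> succ w \<in> X"
    by blast
  have "succ ` X \<subseteq> X"
    using succ by blast
  moreover have "w0 \<in> X"
    using prefers unfolding X_def by simp
  ultimately obtain x d where x: "x \<in> X" and d: "0 < d" "(succ ^^ d) x = x"
    and inj: "inj_on (\<lambda>t. (succ ^^ t) x) {0..<d}"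
    by (rule funpow_cycle_in_finite_invariant[OF finite])
  define ws where "ws t = (succ ^^ t) x" for t
  define fs where "fs t = the (\<sigma>' (ws t))" for t
  have ws_in_X: "ws t \<in> X" for t
    unfolding ws_def by (induction t) (use x succ in auto)
  have step: "\<sigma>' (ws (Suc t)) = Some (fs (Suc t)) \<and> \<sigma> (ws t) = Some (fs (Suc t))
      \<and> uf (fs (Suc t)) (ws t) < uf (fs (Suc t)) (ws (Suc t))" for t
    using succ ws_in_X[of t] unfolding fs_def ws_def by auto
  have ws_mod: "ws (t mod d) = ws t" for t
    unfolding ws_def by (rule funpow_mod_eq[OF d(2)])
  have fs_mod: "fs (t mod d) = fs t" for t
    unfolding fs_def ws_mod ..
  have "Suc (t + d - 1) mod d = t mod d" for t
    using d by simp
  then have partner': "\<sigma>' (ws t) = Some (fs t)" for t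
    using step[of "t + d - 1"] ws_mod fs_mod by metis
  have "pref_cycle uf uw d fs ws"
  proof (rule pref_cycle_if_periodic[where ws = ws and fs = fs, OF _ ws_mod fs_mod])
    show "2 \<le> d"
    proof (rule ccontr)
      assume "\<not> 2 \<le> d"
      then have "ws (Suc 0) = ws 0"
        using ws_mod[of 1] ws_mod[of 0] d by simp
      then show False
        using ws_in_X[of 0] step[of 0] partner'[of 0] unfolding X_def by simp
    qed
    show inj_ws: "inj_on ws {..<d}"
      using inj unfolding ws_def by (simp add: atLeast0LessThan)
    show "inj_on fs {..<d}"
    proof (rule inj_onI)
      fix a b assume "a \<in> {..<d}" "b \<in> {..<d}" "fs a = fs b"
      moreover have "ws a = ws b"
        using partner'[of a] partner'[of b] \<open>fs a = fs b\<close> stable_under_is_matching[OF stable']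
        unfolding is_matching_def by auto
      ultimately show "a = b"
        using inj_ws by (simp add: inj_on_eq_iff)
    qed
    show "uf (fs (Suc t)) (ws t) < uf (fs (Suc t)) (ws (Suc t))" for t
      using step by blast
    show "uw (fs t) (ws t) < uw (fs (Suc t)) (ws t)" for t
      using ws_in_X[of t] step[of t] partner'[of t] unfolding X_def by simp
  qed
  then show ?thesis by blast
qed

lemma stable_under_unique_if_no_pref_cycle:
  assumes "no_pref_cycle uf uw" "stable_under uf uw A \<sigma>" "stable_under uf uw A \<sigma>'"
  shows "\<sigma> = \<sigma>'"
proof
  fix w
  show "\<sigma> w = \<sigma>' w"
  proof (rule ccontr)
    assume "\<sigma> w \<noteq> \<sigma>' w"
    then have "wval uw w (\<sigma>' w) \<noteq> wval uw w (\<sigma> w)"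
      using wval_eq_iff by metis
    then have "wval uw w (\<sigma>' w) < wval uw w (\<sigma> w) \<or> wval uw w (\<sigma> w) < wval uw w (\<sigma>' w)"
      by linarith
    then obtain k fs ws where "pref_cycle uf uw k fs ws"
      using pref_cycle_if_stable_under_differ[OF assms(2,3)]
        pref_cycle_if_stable_under_differ[OF assms(3,2)] by blast
    with assms(1) show False
      unfolding no_pref_cycle_def by blast
  qed
qed

end

section \<open>The sequential preference condition\<close>

locale spc_market = market +
  fixes fo :: "nat \<Rightarrow> 'f::finite" and wo :: "nat \<Rightarrow> 'w::finite"
  assumes spc: "SPC_ordering uf uw fo wo"
begin

lemma fo_index: obtains k where "k < card (UNIV :: 'f set)" "fo k = f"
  using spc unfolding SPC_ordering_def bij_betw_def by (metis UNIV_I imageE lessThan_iff)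

lemma wo_index: obtains k where "k < card (UNIV :: 'w set)" "wo k = w"
  using spc unfolding SPC_ordering_def bij_betw_def by (metis UNIV_I imageE lessThan_iff)

lemma fo_inj:
  "a < card (UNIV :: 'f set) \<Longrightarrow> b < card (UNIV :: 'f set) \<Longrightarrow> fo a = fo b \<Longrightarrow> a = b"
  using spc unfolding SPC_ordering_def bij_betw_def by (meson inj_onD lessThan_iff)

lemma wo_inj:
  "a < card (UNIV :: 'w set) \<Longrightarrow> b < card (UNIV :: 'w set) \<Longrightarrow> wo a = wo b \<Longrightarrow> a = b"
  using spc unfolding SPC_ordering_def bij_betw_def by (meson inj_onD lessThan_iff)

lemma fo_top:
  "i < min (card (UNIV :: 'f set)) (card (UNIV :: 'w set)) \<Longrightarrow> i \<le> j \<Longrightarrow> j < card (UNIV :: 'w set)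
   \<Longrightarrow> uf (fo i) (wo j) \<le> uf (fo i) (wo i)"
  using spc unfolding SPC_ordering_def by blast

lemma wo_top:
  "i < min (card (UNIV :: 'f set)) (card (UNIV :: 'w set)) \<Longrightarrow> i \<le> j \<Longrightarrow> j < card (UNIV :: 'f set)
   \<Longrightarrow> uw (fo j) (wo i) \<le> uw (fo i) (wo i)"
  using spc unfolding SPC_ordering_def by blast

text \<open>Once the first \<open>i\<close> SPC pairs are matched, any other partner of \<open>wo i\<close> or of \<open>fo i\<close>
  comes from the sub-market in which the two are a top-top match.\<close>

lemma SPC_worker_prefers_partner:
  assumes matching: "is_matching \<sigma>" and prefix: "\<forall>j<i. \<sigma> (wo j) = Some (fo j)"
    and i: "i < min (card (UNIV :: 'f set)) (card (UNIV :: 'w set))" and unpaired: "\<sigma> (wo i) \<noteq> Some (fo i)"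
  shows "wval uw (wo i) (\<sigma> (wo i)) < uw (fo i) (wo i)"
proof (cases "\<sigma> (wo i)")
  case None
  then show ?thesis using uw_pos by simp
next
  case (Some f)
  obtain k where k: "k < card (UNIV :: 'f set)" "fo k = f"
    by (rule fo_index)
  have "\<not> k < i"
  proof
    assume "k < i"
    then have "wo k = wo i"
      using matching prefix Some k unfolding is_matching_def by fastforce
    with \<open>k < i\<close> i show False
      using wo_inj[of k i] by simp
  qed
  with k i have "uw f (wo i) \<le> uw (fo i) (wo i)"
    using wo_top[of i k] by simp
  moreover have "f \<noteq> fo i"
    using unpaired Some by simp
  ultimately show ?thesis
    using Some uw_eq_iff by (simp add: order_le_less)
qed

lemma SPC_firm_prefers_partner:
  assumes matching: "is_matching \<sigma>" and prefix: "\<forall>j<i. \<sigma> (wo j) = Some (fo j)"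
    and i: "i < min (card (UNIV :: 'f set)) (card (UNIV :: 'w set))" and unpaired: "\<sigma> (wo i) \<noteq> Some (fo i)"
  shows "fval uf \<sigma> (fo i) < uf (fo i) (wo i)"
proof (cases "\<exists>w. \<sigma> w = Some (fo i)")
  case True
  then obtain w where w: "\<sigma> w = Some (fo i)" by blast
  obtain l where l: "l < card (UNIV :: 'w set)" "wo l = w"
    by (rule wo_index)
  have "\<not> l < i"
  proof
    assume "l < i"
    then have "fo l = fo i"
      using prefix w l by fastforce
    with \<open>l < i\<close> i show False
      using fo_inj[of l i] by simp
  qed
  with l i have "uf (fo i) w \<le> uf (fo i) (wo i)"
    using fo_top[of i l] by simp
  moreover have "w \<noteq> wo i"
    using unpaired w by auto
  ultimately show ?thesis
    using fval_Some[OF matching w] uf_eq_iff by (simp add: order_le_less)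
next
  case False
  then show ?thesis using fval_None[of \<sigma> "fo i"] uf_pos by auto
qed

lemma stable_under_SPC_prefix:
  assumes stable: "stable_under uf uw D \<sigma>" and "J \<le> min (card (UNIV :: 'f set)) (card (UNIV :: 'w set))"
    and acceptable: "\<forall>j<J. fo j \<in> D (wo j)"
  shows "j < J \<Longrightarrow> \<sigma> (wo j) = Some (fo j)"
proof (induction j rule: less_induct)
  case (less j)
  have j: "j < min (card (UNIV :: 'f set)) (card (UNIV :: 'w set))"
    using less.prems assms(2) by simp
  have prefix: "\<forall>k<j. \<sigma> (wo k) = Some (fo k)"
    using less by simp
  show ?case
  proof (rule ccontr)
    assume "\<sigma> (wo j) \<noteq> Some (fo j)"
    then have "wval uw (wo j) (\<sigma> (wo j)) < uw (fo j) (wo j)" "fval uf \<sigma> (fo j) < uf (fo j) (wo j)"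
      using SPC_worker_prefers_partner SPC_firm_prefers_partner stable_under_is_matching[OF stable]
        prefix j by blast+
    then show False
      using stable_under_no_blocking[OF stable] acceptable less.prems by fastforce
  qed
qed

lemma SPC_prefix_rest_unmatched:
  assumes "is_matching \<sigma>" "\<forall>j<min (card (UNIV :: 'f set)) (card (UNIV :: 'w set)). \<sigma> (wo j) = Some (fo j)"
    and "min (card (UNIV :: 'f set)) (card (UNIV :: 'w set)) \<le> j" "j < card (UNIV :: 'w set)"
  shows "\<sigma> (wo j) = None"
proof (rule ccontr)
  assume "\<sigma> (wo j) \<noteq> None"
  then obtain f where f: "\<sigma> (wo j) = Some f" by blast
  obtain k where k: "k < card (UNIV :: 'f set)" "fo k = f"
    by (rule fo_index)
  then have "k < min (card (UNIV :: 'f set)) (card (UNIV :: 'w set))"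
    using assms(3,4) by simp
  then have "wo k = wo j"
    using assms(1,2) f k unfolding is_matching_def by fastforce
  moreover have "k < j"
    using \<open>k < min (card (UNIV :: 'f set)) (card (UNIV :: 'w set))\<close> assms(3) by linarith
  ultimately show False
    using wo_inj[of k j] assms(4) by simp
qed

lemma SPC_prefix_determines_matching:
  assumes "is_matching \<sigma>" "\<forall>j<min (card (UNIV :: 'f set)) (card (UNIV :: 'w set)). \<sigma> (wo j) = Some (fo j)"
    and "is_matching \<sigma>'" "\<forall>j<min (card (UNIV :: 'f set)) (card (UNIV :: 'w set)). \<sigma>' (wo j) = Some (fo j)"
  shows "\<sigma> = \<sigma>'"
proof
  fix w
  obtain j where j: "j < card (UNIV :: 'w set)" "wo j = w"
    by (rule wo_index)
  show "\<sigma> w = \<sigma>' w"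
  proof (cases "j < min (card (UNIV :: 'f set)) (card (UNIV :: 'w set))")
    case True
    then have "\<sigma> (wo j) = Some (fo j)" "\<sigma>' (wo j) = Some (fo j)"
      using assms(2,4) by blast+
    with j show ?thesis by simp
  next
    case False
    then have "min (card (UNIV :: 'f set)) (card (UNIV :: 'w set)) \<le> j"
      by (simp only: not_less)
    then have "\<sigma> (wo j) = None" "\<sigma>' (wo j) = None"
      using SPC_prefix_rest_unmatched[OF assms(1,2) _ j(1)] SPC_prefix_rest_unmatched[OF assms(3,4) _ j(1)]
      by blast+
    with j show ?thesis by simp
  qed
qed

lemma da_add_SPC_partner_better:
  assumes prefix: "\<forall>j<i. fo j \<in> D (wo j)" and i: "i < min (card (UNIV :: 'f set)) (card (UNIV :: 'w set))"
    and dropped: "fo i \<notin> D (wo i)"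
  shows "wval uw (wo i) (da uf uw D (wo i))
    < wval uw (wo i) (da uf uw (D(wo i := insert (fo i) (D (wo i)))) (wo i))"
proof -
  let ?D' = "D(wo i := insert (fo i) (D (wo i)))"
  have "\<forall>j<Suc i. fo j \<in> ?D' (wo j)"
    using prefix by (auto simp: less_Suc_eq)
  then have "da uf uw ?D' (wo i) = Some (fo i)"
    using stable_under_SPC_prefix[OF stable_under_da, of "Suc i"] i by simp
  moreover have "\<forall>j<i. da uf uw D (wo j) = Some (fo j)"
    using stable_under_SPC_prefix[OF stable_under_da _ prefix] i by simp
  moreover have "da uf uw D (wo i) \<noteq> Some (fo i)"
    using da_acceptable dropped by blast
  ultimately show ?thesis
    using SPC_worker_prefers_partner[OF is_matching_da _ i] by simp
qed

lemma da_add_acceptable_firm_no_worse: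
  assumes prefix: "\<forall>j<i. fo j \<in> D (wo j)" and i: "i \<le> min (card (UNIV :: 'f set)) (card (UNIV :: 'w set))"
    and better_in_prefix: "\<And>f. uw g w < uw f w \<Longrightarrow> \<exists>j<i. f = fo j"
  shows "wval uw w (da uf uw D w) \<le> wval uw w (da uf uw (D(w := insert g (D w))) w)"
proof (cases "da uf uw (D(w := insert g (D w))) w = Some g")
  case False
  then show ?thesis by (rule da_add_acceptable_firm_cases)
next
  case True
  let ?D' = "D(w := insert g (D w))"
  show ?thesis
  proof (cases "da uf uw D w")
    case None
    then show ?thesis using wval_nonneg by simp
  next
    case (Some f)
    show ?thesis
    proof (rule ccontr)
      assume "\<not> ?thesis"
      then have "uw g w < uw f w"
        using Some True by simp
      then obtain j where j: "j < i" "f = fo j"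
        using better_in_prefix by blast
      have "da uf uw D (wo j) = Some f"
        using stable_under_SPC_prefix[OF stable_under_da i prefix] j by simp
      then have "wo j = w"
        using Some is_matching_da unfolding is_matching_def by blast
      moreover have "\<forall>j<i. fo j \<in> ?D' (wo j)"
        using prefix by auto
      then have "da uf uw ?D' (wo j) = Some f"
        using stable_under_SPC_prefix[OF stable_under_da i] j by simp
      ultimately show False
        using True \<open>uw g w < uw f w\<close> by simp
    qed
  qed
qed

end

section \<open>Equilibria\<close>

lemma economy_market:
  assumes "economy \<Psi> uf uw"
  shows "market (uf \<theta>) uw"
  using assms unfolding economy_def market_def by blast

lemma economy_spc_market:
  "economy \<Psi> uf uw \<Longrightarrow> SPC_ordering (uf \<theta>) uw fo wo \<Longrightarrow> spc_market (uf \<theta>) uw fo wo"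
  by (intro spc_market.intro spc_market_axioms.intro economy_market)

lemma economy_unique_stable_matching: "economy \<Psi> uf uw \<Longrightarrow> \<exists>!\<mu>. stable_matching (uf \<theta>) uw \<mu>"
  unfolding economy_def by blast

lemma economy_the_stable_matching:
  "economy \<Psi> uf uw \<Longrightarrow> stable_matching (uf \<theta>) uw (THE \<mu>. stable_matching (uf \<theta>) uw \<mu>)"
  by (rule theI'[OF economy_unique_stable_matching])

lemma economy_stable_matching_eq_the:
  "economy \<Psi> uf uw \<Longrightarrow> stable_matching (uf \<theta>) uw \<mu> \<Longrightarrow> \<mu> = (THE \<mu>. stable_matching (uf \<theta>) uw \<mu>)"
  by (rule the1_equality[OF economy_unique_stable_matching, symmetric])

lemma economy_stable_matching_unique:
  assumes "economy \<Psi> uf uw" "stable_matching (uf \<theta>) uw \<mu>" "stable_matching (uf \<theta>) uw \<mu>'"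
  shows "\<mu> = \<mu>'"
  using economy_stable_matching_eq_the[OF assms(1,2)] economy_stable_matching_eq_the[OF assms(1,3)]
  by simp

lemma exp_util_mono:
  assumes "economy \<Psi> uf uw"
    and "\<And>\<theta>. wval uw w (da (uf \<theta>) uw D w) \<le> wval uw w (da (uf \<theta>) uw D' w)"
  shows "exp_util \<Psi> uf uw D w \<le> exp_util \<Psi> uf uw D' w"
  unfolding exp_util_def
  by (rule sum_mono) (use assms in \<open>auto simp: economy_def intro: mult_left_mono less_imp_le\<close>)

lemma exp_util_strict_mono:
  assumes "economy \<Psi> uf uw"
    and "\<And>\<theta>. wval uw w (da (uf \<theta>) uw D w) \<le> wval uw w (da (uf \<theta>) uw D' w)"
    and "wval uw w (da (uf \<theta>0) uw D w) < wval uw w (da (uf \<theta>0) uw D' w)"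
  shows "exp_util \<Psi> uf uw D w < exp_util \<Psi> uf uw D' w"
  unfolding exp_util_def
  by (rule sum_strict_mono_ex1) (use assms in \<open>auto simp: economy_def intro: mult_left_mono less_imp_le\<close>)

lemma BNE_dropping_no_dominating_deviation:
  assumes "economy \<Psi> uf uw" "BNE_dropping \<Psi> uf uw D"
    and "\<And>\<theta>. wval uw w (da (uf \<theta>) uw D w) \<le> wval uw w (da (uf \<theta>) uw (D(w := S)) w)"
  shows "wval uw w (da (uf \<theta>) uw (D(w := S)) w) = wval uw w (da (uf \<theta>) uw D w)"
proof (rule ccontr)
  assume "\<not> ?thesis"
  then have "wval uw w (da (uf \<theta>) uw D w) < wval uw w (da (uf \<theta>) uw (D(w := S)) w)"
    using assms(3)[of \<theta>] by simp
  then have "exp_util \<Psi> uf uw D w < exp_util \<Psi> uf uw (D(w := S)) w"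
    using exp_util_strict_mono[OF assms(1,3)] by blast
  with assms(2) show False
    unfolding BNE_dropping_def by (meson not_less)
qed

lemma BNE_dropping_truthful:
  assumes "economy \<Psi> uf uw"
  shows "BNE_dropping \<Psi> uf uw (\<lambda>_. UNIV)"
  unfolding BNE_dropping_def
proof (intro allI)
  fix w S
  have "wval uw w (da (uf \<theta>) uw ((\<lambda>_. UNIV)(w := S)) w) \<le> wval uw w (da (uf \<theta>) uw (\<lambda>_. UNIV) w)" for \<theta>
  proof -
    interpret market "uf \<theta>" uw
      using assms by (rule economy_market)
    have truthful: "(\<lambda>_. UNIV)(w := UNIV) = (\<lambda>_. UNIV)"
      by auto
    have "wval uw w (da (uf \<theta>) uw ((\<lambda>_. UNIV)(w := S)) w)
        \<le> wval uw w (da (uf \<theta>) uw ((\<lambda>_. UNIV)(w := UNIV)) w)"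
    proof (rule truthful_report_not_worse)
      show "\<sigma> = \<sigma>'" if "stable_under (uf \<theta>) uw ((\<lambda>_. UNIV)(w := UNIV)) \<sigma>"
        "stable_under (uf \<theta>) uw ((\<lambda>_. UNIV)(w := UNIV)) \<sigma>'" for \<sigma> \<sigma>'
        using economy_stable_matching_unique[OF assms, of \<theta>] that
        unfolding truthful stable_matching_iff_stable_under_UNIV by blast
    qed
    then show ?thesis
      unfolding truthful .
  qed
  then show "exp_util \<Psi> uf uw ((\<lambda>_. UNIV)(w := S)) w \<le> exp_util \<Psi> uf uw (\<lambda>_. UNIV) w"
    by (rule exp_util_mono[OF assms])
qed

lemma BNE_dropping_stable_if_no_pref_cycle:
  assumes economy: "economy \<Psi> uf uw" and acyclic: "\<forall>\<theta>. no_pref_cycle (uf \<theta>) uw"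
    and bne: "BNE_dropping \<Psi> uf uw D"
  shows "stable_matching (uf \<theta>) uw (da (uf \<theta>) uw D)"
proof -
  have truthful_not_worse:
    "wval uw w (da (uf \<theta>') uw D w) \<le> wval uw w (da (uf \<theta>') uw (D(w := UNIV)) w)" for w \<theta>'
  proof -
    interpret market "uf \<theta>'" uw
      using economy by (rule economy_market)
    have "wval uw w (da (uf \<theta>') uw (D(w := D w)) w) \<le> wval uw w (da (uf \<theta>') uw (D(w := UNIV)) w)"
      by (rule truthful_report_not_worse)
        (use stable_under_unique_if_no_pref_cycle[OF acyclic[rule_format]] in blast)
    then show ?thesis
      by simp
  qed
  interpret market "uf \<theta>" uw
    using economy by (rule economy_market)
  show ?thesis
  proof (rule stable_matching_da_if_truthful_not_better)
    show "\<sigma> = \<sigma>'" if "stable_under (uf \<theta>) uw D \<sigma>" "stable_under (uf \<theta>) uw D \<sigma>'" for \<sigma> \<sigma>'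
      using stable_under_unique_if_no_pref_cycle[OF acyclic[rule_format] that] .
    show "wval uw w (da (uf \<theta>) uw (D(w := UNIV)) w) = wval uw w (da (uf \<theta>) uw D w)" for w
      using BNE_dropping_no_dominating_deviation[OF economy bne truthful_not_worse] .
  qed
qed

lemma BNE_dropping_accepts_SPC_partners:
  fixes uf :: "'s::finite \<Rightarrow> 'f::finite \<Rightarrow> 'w::finite \<Rightarrow> real"
  assumes economy: "economy \<Psi> uf uw" and bne: "BNE_dropping \<Psi> uf uw D"
    and orderings: "\<And>\<theta>. SPC_ordering (uf \<theta>) uw (fo \<theta>) (wo \<theta>)"
    and star: "\<And>\<theta> i f \<theta>'. i < min (card (UNIV :: 'f set)) (card (UNIV :: 'w set))
      \<Longrightarrow> uw (fo \<theta> i) (wo \<theta> i) < uw f (wo \<theta> i) \<Longrightarrow> \<exists>i'<i. f = fo \<theta>' i'"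
  shows "i < min (card (UNIV :: 'f set)) (card (UNIV :: 'w set))
    \<Longrightarrow> fo \<theta> i \<in> D (wo \<theta> i)"
proof (induction i arbitrary: \<theta> rule: less_induct)
  case (less i)
  interpret spc_market "uf \<theta>" uw "fo \<theta>" "wo \<theta>"
    using economy orderings by (rule economy_spc_market)
  have prefix: "\<forall>j<i. fo \<theta>' j \<in> D (wo \<theta>' j)" for \<theta>'
    using less by simp
  show ?case
  proof (rule ccontr)
    assume dropped: "fo \<theta> i \<notin> D (wo \<theta> i)"
    let ?w = "wo \<theta> i" and ?g = "fo \<theta> i"
    have no_worse: "wval uw ?w (da (uf \<theta>') uw D ?w)
        \<le> wval uw ?w (da (uf \<theta>') uw (D(?w := insert ?g (D ?w))) ?w)" for \<theta>'
    proof -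
      interpret spc': spc_market "uf \<theta>'" uw "fo \<theta>'" "wo \<theta>'"
        using economy orderings by (rule economy_spc_market)
      show ?thesis
        using prefix less.prems star[OF less.prems]
        by (intro spc'.da_add_acceptable_firm_no_worse[of i]) auto
    qed
    have "wval uw ?w (da (uf \<theta>) uw D ?w) < wval uw ?w (da (uf \<theta>) uw (D(?w := insert ?g (D ?w))) ?w)"
      using prefix less.prems dropped by (rule da_add_SPC_partner_better)
    then show False
      using BNE_dropping_no_dominating_deviation[OF economy bne no_worse, of \<theta>] by simp
  qed
qed

lemma BNE_dropping_stable_if_SPC_star:
  fixes uf :: "'s::finite \<Rightarrow> 'f::finite \<Rightarrow> 'w::finite \<Rightarrow> real"
  assumes economy: "economy \<Psi> uf uw" and "SPC_star uf uw" and bne: "BNE_dropping \<Psi> uf uw D"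
  shows "stable_matching (uf \<theta>) uw (da (uf \<theta>) uw D)"
proof -
  let ?n = "min (card (UNIV :: 'f set)) (card (UNIV :: 'w set))"
  obtain fo wo where orderings: "\<And>\<theta>. SPC_ordering (uf \<theta>) uw (fo \<theta>) (wo \<theta>)"
    and star: "\<And>\<theta> i f \<theta>'. i < ?n \<Longrightarrow> uw (fo \<theta> i) (wo \<theta> i) < uw f (wo \<theta> i)
      \<Longrightarrow> \<exists>i'<i. f = fo \<theta>' i'"
    using assms(2) unfolding SPC_star_def by blast
  interpret spc_market "uf \<theta>" uw "fo \<theta>" "wo \<theta>"
    using economy orderings by (rule economy_spc_market)
  let ?\<mu> = "THE \<mu>. stable_matching (uf \<theta>) uw \<mu>"
  have stable: "stable_under (uf \<theta>) uw (\<lambda>_. UNIV) ?\<mu>"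
    using economy_the_stable_matching[OF economy] stable_matching_iff_stable_under_UNIV by blast
  have "\<forall>j<?n. fo \<theta> j \<in> D (wo \<theta> j)"
    using BNE_dropping_accepts_SPC_partners[OF economy bne orderings, where \<theta> = \<theta>] star by blast
  then have da_prefix: "\<forall>j<?n. da (uf \<theta>) uw D (wo \<theta> j) = Some (fo \<theta> j)"
    using stable_under_SPC_prefix[OF stable_under_da order_refl] by blast
  have stable_prefix: "\<forall>j<?n. ?\<mu> (wo \<theta> j) = Some (fo \<theta> j)"
    using stable_under_SPC_prefix[OF stable order_refl] by simp
  have "da (uf \<theta>) uw D = ?\<mu>"
    using SPC_prefix_determines_matching[OF is_matching_da da_prefix
        stable_under_is_matching[OF stable] stable_prefix] .
  then show ?thesis
    using economy_the_stable_matching[OF economy] by simp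
qed

theorem proposition2:
  fixes \<Psi> :: "'s::finite \<Rightarrow> real"
    and uf :: "'s \<Rightarrow> 'f::finite \<Rightarrow> 'w::finite \<Rightarrow> real"
    and uw :: "'f \<Rightarrow> 'w \<Rightarrow> real"
  assumes "economy \<Psi> uf uw"
    and "(\<forall>\<theta>. no_pref_cycle (uf \<theta>) uw) \<or> SPC_star uf uw"
  shows "(\<exists>D. BNE_dropping \<Psi> uf uw D)
       \<and> (\<forall>D. BNE_dropping \<Psi> uf uw D \<longrightarrow>
              (\<forall>\<theta>. da (uf \<theta>) uw D = (THE \<mu>. stable_matching (uf \<theta>) uw \<mu>)))"
proof (intro conjI allI impI)
  show "\<exists>D. BNE_dropping \<Psi> uf uw D"
    using BNE_dropping_truthful[OF assms(1)] by blast
  fix D \<theta> assume "BNE_dropping \<Psi> uf uw D"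
  then have "stable_matching (uf \<theta>) uw (da (uf \<theta>) uw D)"
    using assms BNE_dropping_stable_if_no_pref_cycle BNE_dropping_stable_if_SPC_star by blast
  then show "da (uf \<theta>) uw D = (THE \<mu>. stable_matching (uf \<theta>) uw \<mu>)"
    by (rule economy_stable_matching_eq_the[OF assms(1)])
qed

end
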